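(* Let $J\subseteq\mathbb{R}$ be an open interval and let $\gamma:J\to{\rm AdS}$ be a null curve satisfying the standing assumptions below, with bending $\kappa$ and spinor frame field $(F_+,F_-)$. Then the first column vectors $\eta_+$ of $F_+$ and $\eta_-$ of $F_-$ are star-shaped curves $J\to\dot{\mathbb{R}}^2$, parametrized by central affine arc length, with canonical central affine frame fields $F_+$ and $F_-$ and central affine curvatures $$\mathrm{k}_+=\kappa+1,\qquad \mathrm{k}_-=\kappa-1;$$ in particular $(\eta_+,\eta_-)$ is a pair of cousins. Conversely, let $(\eta_+,\eta_-)$ be a pair of cousins $J\to\dot{\mathbb{R}}^2$ with central affine curvatures $\mathrm{k}_\pm$ and canonical central affine frame fields $F_\pm=(\eta_\pm,\eta_\pm')$. Then $\gamma=F_+F_-^{-1}:J\to{\rm AdS}$ is a null curve, parametrized by proper time and without inflection points, with bending $\kappa=(\mathrm{k}_++\mathrm{k}_-)/2$ and with $(F_+,F_-)$ a spinor frame field along it.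
   Context: Let $\mathbb{R}^{2,2}$ be the space of real $2\times2$ matrices with the quadratic form $q(X)=-\det X$ and its polarization $\langle\cdot,\cdot\rangle$ (signature $(2,2)$). The anti-de Sitter 3-space ${\rm AdS}$ is ${\rm SL}(2,\mathbb{R})\subset\mathbb{R}^{2,2}$ with the induced Lorentzian metric. A smooth immersed curve $\gamma:J\to{\rm AdS}$ is null if $\langle\gamma',\gamma'\rangle=0$. Standing assumptions on null curves: $\gamma$ is future-directed (i.e. $\det\begin{pmatrix}\langle U,\gamma\rangle&\langle U,\gamma'\rangle\\ \langle V,\gamma\rangle&\langle V,\gamma'\rangle\end{pmatrix}>0$ with $U=I_2$, $V=\begin{pmatrix}0&1\\-1&0\end{pmatrix}$), has no inflection points ($\gamma'\wedge\gamma''\neq0$), and is parametrized by proper time, i.e. $\langle\gamma'',\gamma''\rangle=4$. The bending is $\kappa=-\frac1{16}\langle\gamma''',\gamma'''\rangle$. Put $T=\gamma'/\sqrt2$, $N=\gamma''/2$, $B=\frac{1}{\sqrt2}\kappa\gamma'-\frac{1}{2\sqrt2}\gamma'''$ and let $P_1=\begin{pmatrix}1&0\\0&1\end{pmatrix}$, $P_2=\begin{pmatrix}0&\sqrt2\\0&0\end{pmatrix}$, $P_3=\begin{pmatrix}-1&0\\0&1\end{pmatrix}$, $P_4=\begin{pmatrix}0&0\\\sqrt2&0\end{pmatrix}$. It is further assumed (normalization on orientation) that there is a smooth map $(F_+,F_-):J\to{\rm SL}(2,\mathbb{R})\times{\rm SL}(2,\mathbb{R})$ with $\gamma=F_+F_-^{-1}$,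 $T=F_+P_2F_-^{-1}$, $N=F_+P_3F_-^{-1}$, $B=F_+P_4F_-^{-1}$; this is called a spinor frame field along $\gamma$ (unique up to overall sign). Star-shaped curves: $\dot{\mathbb{R}}^2=\mathbb{R}^2\setminus\{0\}$. A smooth curve $\eta:J\to\dot{\mathbb{R}}^2$ is star-shaped if $\det(\eta,\eta')\neq0$; it is parametrized by central affine arc length if $\det(\eta,\eta')=1$; its central affine curvature is $\mathrm{k}=-\det(\eta',\eta'')$ and its canonical central affine frame field is the ${\rm SL}(2,\mathbb{R})$-valued map $F=(\eta,\eta')$ (columns $\eta,\eta'$). A pair of star-shaped curves $(\eta,\bar\eta)$ parametrized by central affine arc length is a pair of cousins if their curvatures satisfy $(\mathrm{k}-\bar{\mathrm{k}})/2=1$. *)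

theory Defs
  imports "HOL-Analysis.Analysis"
begin

type_synonym mat2 = "real^2^2"
type_synonym vec2 = "real^2"

definition mk2 :: "real \<Rightarrow> real \<Rightarrow> real \<Rightarrow> real \<Rightarrow> mat2" where
  "mk2 a b c d = (\<chi> i j. if i = 1 then (if j = 1 then a else b) else (if j = 1 then c else d))"

definition cols2 :: "vec2 \<Rightarrow> vec2 \<Rightarrow> mat2" where
  "cols2 u v = (\<chi> i j. if j = 1 then u $ i else v $ i)"

definition qf :: "mat2 \<Rightarrow> real" where
  "qf X = - det X"

definition ip :: "mat2 \<Rightarrow> mat2 \<Rightarrow> real" where
  "ip X Y = (qf (X + Y) - qf X - qf Y) / 2"

definition AdS :: "mat2 set" where
  "AdS = {X. det X = 1}"

fun nderiv :: "nat \<Rightarrow> (real \<Rightarrow> 'a::real_normed_vector) \<Rightarrow> real \<Rightarrow> 'a" where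
  "nderiv 0 f = f"
| "nderiv (Suc n) f = (\<lambda>t. vector_derivative (nderiv n f) (at t))"

definition smooth_on :: "real set \<Rightarrow> (real \<Rightarrow> 'a::real_normed_vector) \<Rightarrow> bool" where
  "smooth_on J f \<longleftrightarrow> (\<forall>n. \<forall>t\<in>J. (nderiv n f has_vector_derivative nderiv (Suc n) f t) (at t))"

definition open_interval :: "real set \<Rightarrow> bool" where
  "open_interval J \<longleftrightarrow> open J \<and> is_interval J \<and> J \<noteq> {}"

definition Umat :: mat2 where "Umat = mk2 1 0 0 1"
definition Vmat :: mat2 where "Vmat = mk2 0 1 (-1) 0"
definition P1 :: mat2 where "P1 = mk2 1 0 0 1"
definition P2 :: mat2 where "P2 = mk2 0 (sqrt 2) 0 0"
definition P3 :: mat2 where "P3 = mk2 (-1) 0 0 1"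
definition P4 :: mat2 where "P4 = mk2 0 0 (sqrt 2) 0"

definition future_directed :: "real set \<Rightarrow> (real \<Rightarrow> mat2) \<Rightarrow> bool" where
  "future_directed J \<gamma> \<longleftrightarrow> (\<forall>t\<in>J.
     ip Umat (\<gamma> t) * ip Vmat (nderiv 1 \<gamma> t) - ip Umat (nderiv 1 \<gamma> t) * ip Vmat (\<gamma> t) > 0)"

definition no_inflection :: "real set \<Rightarrow> (real \<Rightarrow> mat2) \<Rightarrow> bool" where
  "no_inflection J \<gamma> \<longleftrightarrow> (\<forall>t\<in>J. \<forall>a b::real.
     a *\<^sub>R nderiv 1 \<gamma> t + b *\<^sub>R nderiv 2 \<gamma> t = 0 \<longrightarrow> a = 0 \<and> b = 0)"

definition null_curve :: "real set \<Rightarrow> (real \<Rightarrow> mat2) \<Rightarrow> bool" where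
  "null_curve J \<gamma> \<longleftrightarrow> smooth_on J \<gamma> \<and> (\<forall>t\<in>J. \<gamma> t \<in> AdS)
     \<and> (\<forall>t\<in>J. ip (nderiv 1 \<gamma> t) (nderiv 1 \<gamma> t) = 0)"

definition proper_time :: "real set \<Rightarrow> (real \<Rightarrow> mat2) \<Rightarrow> bool" where
  "proper_time J \<gamma> \<longleftrightarrow> (\<forall>t\<in>J. ip (nderiv 2 \<gamma> t) (nderiv 2 \<gamma> t) = 4)"

definition bending :: "(real \<Rightarrow> mat2) \<Rightarrow> real \<Rightarrow> real" where
  "bending \<gamma> t = - (1/16) * ip (nderiv 3 \<gamma> t) (nderiv 3 \<gamma> t)"

definition Tfr :: "(real \<Rightarrow> mat2) \<Rightarrow> real \<Rightarrow> mat2" where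
  "Tfr \<gamma> t = (1 / sqrt 2) *\<^sub>R nderiv 1 \<gamma> t"
definition Nfr :: "(real \<Rightarrow> mat2) \<Rightarrow> real \<Rightarrow> mat2" where
  "Nfr \<gamma> t = (1 / 2) *\<^sub>R nderiv 2 \<gamma> t"
definition Bfr :: "(real \<Rightarrow> mat2) \<Rightarrow> real \<Rightarrow> mat2" where
  "Bfr \<gamma> t = (bending \<gamma> t / sqrt 2) *\<^sub>R nderiv 1 \<gamma> t - (1 / (2 * sqrt 2)) *\<^sub>R nderiv 3 \<gamma> t"

definition spinor_frame :: "real set \<Rightarrow> (real \<Rightarrow> mat2) \<Rightarrow> (real \<Rightarrow> mat2) \<Rightarrow> (real \<Rightarrow> mat2) \<Rightarrow> bool" where
  "spinor_frame J \<gamma> Fp Fm \<longleftrightarrow> smooth_on J Fp \<and> smooth_on J Fm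
     \<and> (\<forall>t\<in>J. det (Fp t) = 1 \<and> det (Fm t) = 1
          \<and> \<gamma> t = Fp t ** matrix_inv (Fm t)
          \<and> Tfr \<gamma> t = Fp t ** P2 ** matrix_inv (Fm t)
          \<and> Nfr \<gamma> t = Fp t ** P3 ** matrix_inv (Fm t)
          \<and> Bfr \<gamma> t = Fp t ** P4 ** matrix_inv (Fm t))"

definition star_shaped :: "real set \<Rightarrow> (real \<Rightarrow> vec2) \<Rightarrow> bool" where
  "star_shaped J \<eta> \<longleftrightarrow> smooth_on J \<eta> \<and> (\<forall>t\<in>J. \<eta> t \<noteq> 0 \<and> det (cols2 (\<eta> t) (nderiv 1 \<eta> t)) \<noteq> 0)"

definition ca_arclength :: "real set \<Rightarrow> (real \<Rightarrow> vec2) \<Rightarrow> bool" where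
  "ca_arclength J \<eta> \<longleftrightarrow> (\<forall>t\<in>J. det (cols2 (\<eta> t) (nderiv 1 \<eta> t)) = 1)"

definition ca_curvature :: "(real \<Rightarrow> vec2) \<Rightarrow> real \<Rightarrow> real" where
  "ca_curvature \<eta> t = - det (cols2 (nderiv 1 \<eta> t) (nderiv 2 \<eta> t))"

definition ca_frame :: "(real \<Rightarrow> vec2) \<Rightarrow> real \<Rightarrow> mat2" where
  "ca_frame \<eta> t = cols2 (\<eta> t) (nderiv 1 \<eta> t)"

definition cousins :: "real set \<Rightarrow> (real \<Rightarrow> vec2) \<Rightarrow> (real \<Rightarrow> vec2) \<Rightarrow> bool" where
  "cousins J \<eta> \<eta>' \<longleftrightarrow> star_shaped J \<eta> \<and> star_shaped J \<eta>' \<and> ca_arclength J \<eta> \<and> ca_arclength J \<eta>'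
     \<and> (\<forall>t\<in>J. (ca_curvature \<eta> t - ca_curvature \<eta>' t) / 2 = 1)"

end

theory Submission
  imports Defs
begin

text \<open>
  Everything is computed in the spinor frame. On SL(2,R) the inverse is the linear map adj2, and
  if F+' = F+ X and F-' = F- Y with Y trace-free, then the derivative of a sandwich F+ M (adj2 F-)
  with constant M is again a sandwich, F+ (X M - M Y) (adj2 F-); the quadratic form q is invariant
  under sandwiching. For a curve \<eta> parametrized by central affine arc length, the Frenet equation
  \<eta>'' = k \<eta> says that its canonical frame satisfies F' = F C(k) with C(k) = ((0,k),(1,0)).

  For cousins, k+ - k- = 2 makes \<gamma>', \<gamma>'', \<gamma>''' the sandwiches of the constant matrices
  ((0,2),(0,0)), ((-2,0),(0,2)) and ((0,2(k+ + k-)),(-4,0)), from which every property of \<gamma> is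
  read off. Conversely, for a spinor frame the logarithmic derivatives X = F+^-1 F+' and
  Y = F-^-1 F-' are trace-free because det F = 1; comparing \<gamma>' = sqrt 2 T and \<gamma>'' = 2 N with
  the sandwich formula leaves X = C(k), Y = C(k - 2) as the only solutions, and the bending
  read off from \<gamma>''' is k - 1.
\<close>

section \<open>Smooth curves\<close>

lemma nderiv_Suc_shift: "nderiv (Suc n) f = nderiv n (nderiv 1 f)"
  by (induction n) auto

lemma nderiv_Suc_numerals:
  "nderiv (Suc 0) f = nderiv 1 f" "nderiv (Suc 1) f = nderiv 2 f" "nderiv (Suc 2) f = nderiv 3 f"
  by (simp_all only: One_nat_def Suc_1 numeral_3_eq_3 numeral_2_eq_2)

lemma nderiv_eqI:
  assumes "open J" "\<forall>t\<in>J. D 0 t = f t"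
    and "\<And>n t. t \<in> J \<Longrightarrow> (D n has_vector_derivative D (Suc n) t) (at t)"
    and "t \<in> J"
  shows "nderiv n f t = D n t"
  using assms(4)
proof (induction n arbitrary: t)
  case 0
  then show ?case using assms(2) by simp
next
  case (Suc n)
  have "(nderiv n f has_vector_derivative D (Suc n) t) (at t)"
    by (rule has_vector_derivative_transform_within_open[OF assms(3)[OF Suc.prems] assms(1) Suc.prems])
       (simp add: Suc.IH)
  then show ?case by (simp add: vector_derivative_at)
qed

lemma smooth_onI:
  assumes "open J" "\<forall>t\<in>J. D 0 t = f t"
    and "\<And>n t. t \<in> J \<Longrightarrow> (D n has_vector_derivative D (Suc n) t) (at t)"
  shows "smooth_on J f"
  unfolding smooth_on_def
proof (intro allI ballI)
  fix n t assume t: "t \<in> J"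
  have "(nderiv n f has_vector_derivative D (Suc n) t) (at t)"
    by (rule has_vector_derivative_transform_within_open[OF assms(3)[OF t] assms(1) t])
       (simp add: nderiv_eqI[OF assms])
  then show "(nderiv n f has_vector_derivative nderiv (Suc n) f t) (at t)"
    using nderiv_eqI[OF assms t, of "Suc n"] by simp
qed

lemma smooth_on_has_vector_derivative:
  "smooth_on J f \<Longrightarrow> t \<in> J \<Longrightarrow> (f has_vector_derivative nderiv 1 f t) (at t)"
  unfolding smooth_on_def by (drule spec[of _ 0]) simp

lemma smooth_on_nderiv1: "smooth_on J f \<Longrightarrow> smooth_on J (nderiv 1 f)"
  unfolding smooth_on_def by (metis nderiv_Suc_shift)

lemma nderiv_Suc_eqI:
  assumes "open J" "t \<in> J" "\<forall>s\<in>J. nderiv n f s = g s" "(g has_vector_derivative g') (at t)"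
  shows "nderiv (Suc n) f t = g'"
proof -
  have "(nderiv n f has_vector_derivative g') (at t)"
    by (rule has_vector_derivative_transform_within_open[OF assms(4,1,2)]) (use assms(3) in auto)
  then show ?thesis by (simp add: vector_derivative_at)
qed

lemma has_real_derivative_const_on_open:
  assumes "open J" "t \<in> J" "\<forall>s\<in>J. f s = c" "(f has_real_derivative D) (at t)"
  shows "D = 0"
proof -
  have "(f has_real_derivative 0) (at t)"
    by (rule has_field_derivative_transform_within_open[OF DERIV_const assms(1,2)]) (use assms(3) in auto)
  then show ?thesis using assms(4) DERIV_unique by blast
qed

lemma smooth_on_cong:
  assumes "open J" "\<forall>t\<in>J. f t = g t" "smooth_on J f"
  shows "smooth_on J g"
  by (rule smooth_onI[of J "\<lambda>n. nderiv n f"]) (use assms in \<open>auto simp: smooth_on_def\<close>)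

lemma smooth_on_linear:
  assumes "open J" "bounded_linear L" "smooth_on J f"
  shows "smooth_on J (\<lambda>t. L (f t))"
    and "t \<in> J \<Longrightarrow> nderiv n (\<lambda>t. L (f t)) t = L (nderiv n f t)"
proof -
  have D: "((\<lambda>t. L (nderiv n f t)) has_vector_derivative L (nderiv (Suc n) f t)) (at t)"
    if "t \<in> J" for n t
    by (rule bounded_linear.has_vector_derivative[OF assms(2)])
       (use assms(3) that in \<open>simp add: smooth_on_def\<close>)
  show "smooth_on J (\<lambda>t. L (f t))"
    by (rule smooth_onI[of J "\<lambda>n t. L (nderiv n f t)"]) (use assms(1) D in auto)
  show "t \<in> J \<Longrightarrow> nderiv n (\<lambda>t. L (f t)) t = L (nderiv n f t)"
    by (rule nderiv_eqI[of J "\<lambda>n t. L (nderiv n f t)"]) (use assms(1) D in auto)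
qed

lemma smooth_on_coinduct:
  assumes "open J" "P f"
    and "\<And>h. P h \<Longrightarrow> \<exists>h'. (\<forall>t\<in>J. (h has_vector_derivative h' t) (at t)) \<and> P h'"
  shows "smooth_on J f"
proof -
  obtain next_deriv where next_deriv:
    "\<And>h. P h \<Longrightarrow> (\<forall>t\<in>J. (h has_vector_derivative next_deriv h t) (at t)) \<and> P (next_deriv h)"
    using assms(3) by metis
  define D where "D n = (next_deriv ^^ n) f" for n
  have "P (D n)" for n by (induction n) (auto simp: D_def assms(2) next_deriv)
  then show ?thesis
    by (intro smooth_onI[of J D]) (use assms(1) next_deriv in \<open>auto simp: D_def\<close>)
qed

inductive bilinear_sum_on :: "real set \<Rightarrow> ('a::real_normed_vector \<Rightarrow> 'b::real_normed_vector \<Rightarrow> 'c::real_normed_vector)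
    \<Rightarrow> (real \<Rightarrow> 'c) \<Rightarrow> bool"
  for J B where
  prod: "smooth_on J u \<Longrightarrow> smooth_on J v \<Longrightarrow> bilinear_sum_on J B (\<lambda>t. B (u t) (v t))"
| add: "bilinear_sum_on J B h \<Longrightarrow> bilinear_sum_on J B k \<Longrightarrow> bilinear_sum_on J B (\<lambda>t. h t + k t)"

lemma bilinear_sum_on_derivative:
  assumes "bounded_bilinear B" "bilinear_sum_on J B h"
  shows "\<exists>h'. (\<forall>t\<in>J. (h has_vector_derivative h' t) (at t)) \<and> bilinear_sum_on J B h'"
  using assms(2)
proof induction
  case (prod u v)
  have "bilinear_sum_on J B (\<lambda>t. B (u t) (nderiv 1 v t) + B (nderiv 1 u t) (v t))"
    by (intro bilinear_sum_on.add bilinear_sum_on.prod prod smooth_on_nderiv1)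
  moreover have "((\<lambda>t. B (u t) (v t)) has_vector_derivative B (u t) (nderiv 1 v t) + B (nderiv 1 u t) (v t)) (at t)"
    if "t \<in> J" for t
    by (rule bounded_bilinear.has_vector_derivative[OF assms(1)
        smooth_on_has_vector_derivative[OF prod(1) that] smooth_on_has_vector_derivative[OF prod(2) that]])
  ultimately show ?case by (intro exI conjI) auto
next
  case (add h k)
  then obtain h' k' where "\<forall>t\<in>J. (h has_vector_derivative h' t) (at t)" "bilinear_sum_on J B h'"
    "\<forall>t\<in>J. (k has_vector_derivative k' t) (at t)" "bilinear_sum_on J B k'"
    by blast
  then show ?case
    by (intro exI[of _ "\<lambda>t. h' t + k' t"]) (auto intro: has_vector_derivative_add bilinear_sum_on.add)
qed

lemma smooth_on_bilinear:
  assumes "open J" "bounded_bilinear B" "smooth_on J f" "smooth_on J g"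
  shows "smooth_on J (\<lambda>t. B (f t) (g t))"
  by (rule smooth_on_coinduct[where P = "bilinear_sum_on J B"])
     (use assms bilinear_sum_on_derivative bilinear_sum_on.prod in auto)

section \<open>Two-by-two matrices\<close>

lemma mat2_eq_iff: "(X::mat2) = Y \<longleftrightarrow> X$1$1 = Y$1$1 \<and> X$1$2 = Y$1$2 \<and> X$2$1 = Y$2$1 \<and> X$2$2 = Y$2$2"
  by (auto simp: vec_eq_iff forall_2)

lemma vec2_eq_iff: "(x::vec2) = y \<longleftrightarrow> x$1 = y$1 \<and> x$2 = y$2"
  by (auto simp: vec_eq_iff forall_2)

lemma mk2_nth [simp]:
  "mk2 a b c d $1$1 = a" "mk2 a b c d $1$2 = b" "mk2 a b c d $2$1 = c" "mk2 a b c d $2$2 = d"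
  by (simp_all add: mk2_def)

lemma cols2_nth [simp]:
  "cols2 u v $i$1 = u$i" "cols2 u v $i$2 = v$i"
  by (simp_all add: cols2_def)

lemma column_nth [simp]: "column j (X::mat2) $ i = X $ i $ j"
  unfolding column_def by (rule vec_lambda_beta)

lemmas mat2_entry_simps = mat2_eq_iff vec2_eq_iff matrix_matrix_mult_def sum_2 det_2 trace_def mat_def

lemma bounded_linear_column: "bounded_linear (\<lambda>X::mat2. column j X)"
  by (rule linear_conv_bounded_linear[THEN iffD1]) (auto intro!: linearI simp: vec_eq_iff column_def)

lemma bounded_bilinear_matrix_mult: "bounded_bilinear (\<lambda>X Y::mat2. X ** Y)"
proof -
  have "bilinear (\<lambda>X Y::mat2. X ** Y)"
    unfolding bilinear_def
    by (auto intro!: linearI simp: vec_eq_iff matrix_matrix_mult_def sum_2 algebra_simps)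
  then show ?thesis by (rule bilinear_conv_bounded_bilinear[THEN iffD1])
qed

text \<open>On SL(2,R) this is the inverse (matrix_inv_eq_adj2); unlike matrix_inv it is linear, hence
  easy to differentiate.\<close>
definition adj2 :: "mat2 \<Rightarrow> mat2" where
  "adj2 X = mk2 (X$2$2) (- X$1$2) (- X$2$1) (X$1$1)"

lemma matrix_mul_adj2: "A ** adj2 A = det A *\<^sub>R mat 1"
  by (simp add: adj2_def mat2_entry_simps)

lemma adj2_matrix_mul: "adj2 A ** A = det A *\<^sub>R mat 1"
  by (simp add: adj2_def mat2_entry_simps)

lemma adj2_mult: "adj2 (A ** B) = adj2 B ** adj2 A"
  by (simp add: adj2_def mat2_entry_simps algebra_simps)

lemma det_adj2 [simp]: "det (adj2 A) = det A"
  by (simp add: adj2_def det_2 mult.commute)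

lemma adj2_trace_zero: "trace Y = 0 \<Longrightarrow> adj2 Y = - Y"
  by (simp add: adj2_def mat2_entry_simps add_eq_0_iff)

lemma bounded_linear_adj2: "bounded_linear adj2"
  by (rule linear_conv_bounded_linear[THEN iffD1]) (auto intro!: linearI simp: adj2_def mat2_entry_simps)

lemma matrix_inv_eq:
  fixes A X :: mat2
  assumes "A ** X = mat 1" "X ** A = mat 1"
  shows "matrix_inv A = X"
proof -
  have "\<exists>Y. A ** Y = mat 1 \<and> Y ** A = mat 1" using assms by blast
  then have "matrix_inv A ** A = mat 1"
    unfolding matrix_inv_def by (metis (mono_tags, lifting) someI_ex)
  then have "matrix_inv A ** (A ** X) = X"
    by (simp add: matrix_mul_assoc)
  then show ?thesis by (simp add: assms(1))
qed

lemma matrix_inv_eq_adj2: "det A = 1 \<Longrightarrow> matrix_inv A = adj2 A"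
  by (simp add: matrix_inv_eq matrix_mul_adj2 adj2_matrix_mul)

lemma scaleR_sandwich:
  fixes A M B :: mat2
  shows "r *\<^sub>R (A ** M ** B) = A ** (r *\<^sub>R M) ** B"
  by (simp add: mat2_entry_simps algebra_simps)

lemma sandwich_add:
  fixes A M N B :: mat2
  shows "A ** M ** B + A ** N ** B = A ** (M + N) ** B"
  by (simp add: mat2_entry_simps algebra_simps)

lemma sandwich_diff:
  fixes A M N B :: mat2
  shows "A ** M ** B - A ** N ** B = A ** (M - N) ** B"
  by (simp add: mat2_entry_simps algebra_simps)

lemma sandwich_adj2_cancel:
  fixes A B M :: mat2
  assumes "det A = 1" "det B = 1"
  shows "adj2 A ** (A ** M ** adj2 B) ** B = M"
  by (simp add: matrix_mul_assoc adj2_matrix_mul assms flip: matrix_mul_assoc[of _ _ B])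

lemma sandwich_adj2_eq_iff:
  fixes A B M N :: mat2
  assumes "det A = 1" "det B = 1"
  shows "A ** M ** adj2 B = A ** N ** adj2 B \<longleftrightarrow> M = N"
  by (metis sandwich_adj2_cancel[OF assms])

lemma ip_mk2: "ip (mk2 a b c d) (mk2 e f g h) = - (a*h + e*d - b*g - f*c) / 2"
  by (simp add: ip_def qf_def det_2 mat2_eq_iff algebra_simps)

lemma ip_sandwich:
  assumes "det A = 1" "det B = 1"
  shows "ip (A ** X ** B) (A ** Y ** B) = ip X Y"
  using assms by (simp add: ip_def qf_def sandwich_add det_mul)

section \<open>Derivatives of frames in SL(2,R)\<close>

lemma has_real_derivative_mat2_nth:
  "(F has_vector_derivative F') (at t) \<Longrightarrow> ((\<lambda>s. F s $ i $ j) has_real_derivative F' $ i $ j) (at t)"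
  unfolding has_real_derivative_iff_has_vector_derivative
  by (intro bounded_linear.has_vector_derivative[OF bounded_linear_vec_nth])

lemma has_real_derivative_det2:
  fixes F :: "real \<Rightarrow> mat2"
  assumes "(F has_vector_derivative F') (at t)"
  shows "((\<lambda>s. det (F s)) has_real_derivative trace (adj2 (F t) ** F')) (at t)"
proof -
  note D = has_real_derivative_mat2_nth[OF assms]
  have "((\<lambda>s. F s$1$1 * F s$2$2 - F s$1$2 * F s$2$1) has_real_derivative
      F' $1$1 * F t$2$2 + F' $2$2 * F t$1$1 - (F' $1$2 * F t$2$1 + F' $2$1 * F t$1$2)) (at t)"
    by (intro DERIV_diff DERIV_mult D)
  then show ?thesis
    by (simp add: det_2 adj2_def mat2_entry_simps algebra_simps)
qed

lemma sl2_log_derivative: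
  fixes F :: "real \<Rightarrow> mat2"
  assumes "open J" "t \<in> J" "\<forall>s\<in>J. det (F s) = 1" "(F has_vector_derivative F') (at t)"
  shows "F' = F t ** (adj2 (F t) ** F')" and "trace (adj2 (F t) ** F') = 0"
proof -
  show "F' = F t ** (adj2 (F t) ** F')"
    using assms(2,3) by (simp add: matrix_mul_assoc matrix_mul_adj2)
  show "trace (adj2 (F t) ** F') = 0"
    using has_real_derivative_const_on_open[OF assms(1-3) has_real_derivative_det2[OF assms(4)]] .
qed

lemma has_vector_derivative_sandwich_adj2:
  fixes A B :: "real \<Rightarrow> mat2"
  assumes "(A has_vector_derivative A t ** X) (at t)" "(B has_vector_derivative B t ** Y) (at t)"
    and "trace Y = 0"
  shows "((\<lambda>s. A s ** M ** adj2 (B s)) has_vector_derivative A t ** (X ** M - M ** Y) ** adj2 (B t)) (at t)"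
proof -
  have "((\<lambda>s. A s ** M) has_vector_derivative A t ** X ** M) (at t)"
    using bounded_bilinear.has_vector_derivative[OF bounded_bilinear_matrix_mult assms(1)
        has_vector_derivative_const[of M]] by simp
  moreover have "((\<lambda>s. adj2 (B s)) has_vector_derivative - Y ** adj2 (B t)) (at t)"
    using bounded_linear.has_vector_derivative[OF bounded_linear_adj2 assms(2)]
    by (simp add: adj2_mult adj2_trace_zero[OF assms(3)])
  ultimately have "((\<lambda>s. A s ** M ** adj2 (B s)) has_vector_derivative
      A t ** M ** (- Y ** adj2 (B t)) + A t ** X ** M ** adj2 (B t)) (at t)"
    by (rule bounded_bilinear.has_vector_derivative[OF bounded_bilinear_matrix_mult])
  moreover have "A t ** M ** (- Y ** adj2 (B t)) + A t ** X ** M ** adj2 (B t)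
      = A t ** (X ** M - M ** Y) ** adj2 (B t)"
    by (simp add: mat2_entry_simps algebra_simps)
  ultimately show ?thesis by simp
qed

lemma nderiv_Suc_sandwich_adj2:
  fixes A B :: "real \<Rightarrow> mat2"
  assumes "open J" "t \<in> J" "\<forall>s\<in>J. nderiv n \<gamma> s = A s ** M ** adj2 (B s)"
    and "(A has_vector_derivative A t ** X) (at t)" "(B has_vector_derivative B t ** Y) (at t)"
    and "trace Y = 0"
  shows "nderiv (Suc n) \<gamma> t = A t ** (X ** M - M ** Y) ** adj2 (B t)"
  using nderiv_Suc_eqI[OF assms(1-3) has_vector_derivative_sandwich_adj2[OF assms(4-6)]] .

section \<open>Central affine frames\<close>

text \<open>The central affine Frenet equation \<eta>'' = k \<eta> reads F' = F (ca_cartan k) for F = (\<eta>, \<eta>').\<close>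
definition ca_cartan :: "real \<Rightarrow> mat2" where
  "ca_cartan k = mk2 0 k 1 0"

lemma trace_ca_cartan [simp]: "trace (ca_cartan k) = 0"
  by (simp add: ca_cartan_def trace_def sum_2)

lemma column_matrix_mult_ca_cartan:
  fixes F :: mat2
  shows "column 1 (F ** ca_cartan k) = column 2 F" "column 2 (F ** ca_cartan k) = k *\<^sub>R column 1 F"
  by (simp_all add: ca_cartan_def mat2_entry_simps)

lemma ca_cartan_brackets:
  "ca_cartan a - ca_cartan b = mk2 0 (a - b) 0 0"
  "ca_cartan a ** mk2 0 2 0 0 - mk2 0 2 0 0 ** ca_cartan b = mk2 (-2) 0 0 2"
  "ca_cartan a ** mk2 (-2) 0 0 2 - mk2 (-2) 0 0 2 ** ca_cartan b = mk2 0 (2 * (a + b)) (-4) 0"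
  by (simp_all add: ca_cartan_def mat2_entry_simps)

lemma sl2_frame_equations:
  assumes "trace X = 0" "trace Y = 0" "X - Y = mk2 0 2 0 0"
    and "X ** mk2 0 2 0 0 - mk2 0 2 0 0 ** Y = mk2 (-2) 0 0 2"
  shows "X = ca_cartan (X$1$2)" "Y = ca_cartan (X$1$2 - 2)"
  using assms by (simp_all add: ca_cartan_def mat2_entry_simps)

lemma det_cols2_scaleR: "det (cols2 u v) *\<^sub>R w = det (cols2 w v) *\<^sub>R u + det (cols2 u w) *\<^sub>R v"
  by (simp add: det_2 vec2_eq_iff algebra_simps)

lemma has_vector_derivative_cols2:
  assumes "(u has_vector_derivative u') (at t)" "(v has_vector_derivative v') (at t)"
  shows "((\<lambda>s. cols2 (u s) (v s)) has_vector_derivative cols2 u' v') (at t)"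
proof -
  have "bounded_linear (\<lambda>u. cols2 u 0)" "bounded_linear (\<lambda>v. cols2 0 v)"
    by (auto intro!: linearI linear_conv_bounded_linear[THEN iffD1] simp: vec_eq_iff cols2_def)
  from has_vector_derivative_add[OF bounded_linear.has_vector_derivative[OF this(1) assms(1)]
      bounded_linear.has_vector_derivative[OF this(2) assms(2)]]
  moreover have "cols2 x 0 + cols2 0 y = cols2 x y" for x y
    by (simp add: mat2_eq_iff)
  ultimately show ?thesis by simp
qed

lemma smooth_on_ca_frame:
  assumes "open J" "smooth_on J \<eta>"
  shows "smooth_on J (ca_frame \<eta>)"
proof -
  have D: "(nderiv n \<eta> has_vector_derivative nderiv (Suc n) \<eta> t) (at t)" if "t \<in> J" for n t
    using assms(2) that unfolding smooth_on_def by blast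
  show ?thesis
  proof (rule smooth_onI[of J "\<lambda>n t. cols2 (nderiv n \<eta> t) (nderiv (Suc n) \<eta> t)"])
    show "\<And>n t. t \<in> J \<Longrightarrow> ((\<lambda>t. cols2 (nderiv n \<eta> t) (nderiv (Suc n) \<eta> t)) has_vector_derivative
        cols2 (nderiv (Suc n) \<eta> t) (nderiv (Suc (Suc n)) \<eta> t)) (at t)"
      by (rule has_vector_derivative_cols2[OF D D])
  qed (use assms(1) in \<open>simp_all add: ca_frame_def\<close>)
qed

lemma ca_frame_has_vector_derivative:
  assumes "open J" "smooth_on J \<eta>" "ca_arclength J \<eta>" "t \<in> J"
  shows "(ca_frame \<eta> has_vector_derivative ca_frame \<eta> t ** ca_cartan (ca_curvature \<eta> t)) (at t)"
proof -
  let ?F' = "cols2 (nderiv 1 \<eta> t) (nderiv 2 \<eta> t)"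
  have D: "(nderiv n \<eta> has_vector_derivative nderiv (Suc n) \<eta> t) (at t)" for n
    using assms(2,4) unfolding smooth_on_def by blast
  have F': "(ca_frame \<eta> has_vector_derivative ?F') (at t)"
    unfolding ca_frame_def using has_vector_derivative_cols2[OF D[of 0] D[of 1]]
    by (simp add: numeral_2_eq_2)
  have det1: "\<forall>s\<in>J. det (ca_frame \<eta> s) = 1"
    using assms(3) by (simp add: ca_arclength_def ca_frame_def)
  have "trace (adj2 (ca_frame \<eta> t) ** ?F') = 0"
    by (rule sl2_log_derivative(2)[OF assms(1,4) det1 F'])
  then have "det (cols2 (\<eta> t) (nderiv 2 \<eta> t)) = 0"
    by (simp add: ca_frame_def adj2_def mat2_entry_simps algebra_simps)
  then have "nderiv 2 \<eta> t = ca_curvature \<eta> t *\<^sub>R \<eta> t"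
    using det_cols2_scaleR[of "\<eta> t" "nderiv 1 \<eta> t" "nderiv 2 \<eta> t"] det1 assms(4)
    by (simp add: ca_frame_def ca_curvature_def det_2 algebra_simps)
  moreover have "cols2 (nderiv 1 \<eta> t) (ca_curvature \<eta> t *\<^sub>R \<eta> t)
      = ca_frame \<eta> t ** ca_cartan (ca_curvature \<eta> t)"
    by (simp add: ca_frame_def ca_cartan_def mat2_entry_simps)
  ultimately show ?thesis using F' by simp
qed

lemma ca_frame_of_cartan:
  fixes F :: "real \<Rightarrow> mat2"
  assumes "open J" "smooth_on J F" "\<forall>t\<in>J. det (F t) = 1"
    and "\<forall>t\<in>J. nderiv 1 F t = F t ** ca_cartan (k t)"
  defines "\<eta> \<equiv> \<lambda>t. column 1 (F t)"
  shows "star_shaped J \<eta>" "ca_arclength J \<eta>" "\<forall>t\<in>J. ca_frame \<eta> t = F t \<and> ca_curvature \<eta> t = k t"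
proof -
  have smooth: "smooth_on J \<eta>"
    unfolding \<eta>_def by (rule smooth_on_linear(1)[OF assms(1) bounded_linear_column assms(2)])
  have d1: "\<forall>t\<in>J. nderiv 1 \<eta> t = column 2 (F t)"
  proof
    fix t assume "t \<in> J"
    then have "nderiv 1 \<eta> t = column 1 (nderiv 1 F t)"
      unfolding \<eta>_def by (rule smooth_on_linear(2)[OF assms(1) bounded_linear_column assms(2)])
    with \<open>t \<in> J\<close> assms(4) show "nderiv 1 \<eta> t = column 2 (F t)"
      by (simp only: column_matrix_mult_ca_cartan)
  qed
  have d2: "nderiv 2 \<eta> t = k t *\<^sub>R \<eta> t" if "t \<in> J" for t
  proof -
    have "((\<lambda>s. column 2 (F s)) has_vector_derivative column 2 (nderiv 1 F t)) (at t)"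
      by (rule bounded_linear.has_vector_derivative[OF bounded_linear_column
          smooth_on_has_vector_derivative[OF assms(2) that]])
    from nderiv_Suc_eqI[OF assms(1) that d1 this] show ?thesis
      using assms(4) that by (simp add: numeral_2_eq_2 \<eta>_def column_matrix_mult_ca_cartan)
  qed
  have frame: "\<forall>t\<in>J. ca_frame \<eta> t = F t"
    using d1 by (simp add: ca_frame_def \<eta>_def mat2_entry_simps)
  then show "ca_arclength J \<eta>"
    using assms(3) by (simp add: ca_arclength_def ca_frame_def)
  moreover have "\<eta> t \<noteq> 0" if "t \<in> J" for t
    using assms(3) that by (auto simp: \<eta>_def det_2 vec2_eq_iff)
  ultimately show "star_shaped J \<eta>"
    using smooth by (simp add: star_shaped_def ca_arclength_def)
  show "\<forall>t\<in>J. ca_frame \<eta> t = F t \<and> ca_curvature \<eta> t = k t"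
    using frame d1 d2 assms(3) by (simp add: ca_curvature_def \<eta>_def det_2 algebra_simps)
qed

section \<open>Null curves and pairs of cousins\<close>

lemma scaleR_P2_P3: "sqrt 2 *\<^sub>R P2 = mk2 0 2 0 0" "2 *\<^sub>R P3 = mk2 (-2) 0 0 2"
  by (simp_all add: P2_def P3_def mat2_eq_iff)

lemma spinor_frame_nderiv_eq_cartan:
  assumes J: "open J" and frame: "spinor_frame J \<gamma> Fp Fm" and t: "t \<in> J"
  shows "nderiv 1 Fp t = Fp t ** ca_cartan (bending \<gamma> t + 1)"
    and "nderiv 1 Fm t = Fm t ** ca_cartan (bending \<gamma> t - 1)"
proof -
  from frame have smooth: "smooth_on J Fp" "smooth_on J Fm"
    and det: "\<forall>s\<in>J. det (Fp s) = 1" "\<forall>s\<in>J. det (Fm s) = 1"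
    and \<gamma>: "\<forall>s\<in>J. \<gamma> s = Fp s ** matrix_inv (Fm s)"
    and T: "\<forall>s\<in>J. Tfr \<gamma> s = Fp s ** P2 ** matrix_inv (Fm s)"
    and N: "\<forall>s\<in>J. Nfr \<gamma> s = Fp s ** P3 ** matrix_inv (Fm s)"
    unfolding spinor_frame_def by auto
  define X where "X = adj2 (Fp t) ** nderiv 1 Fp t"
  define Y where "Y = adj2 (Fm t) ** nderiv 1 Fm t"
  note Dp = smooth_on_has_vector_derivative[OF smooth(1) t]
  note Dm = smooth_on_has_vector_derivative[OF smooth(2) t]
  have X: "nderiv 1 Fp t = Fp t ** X" "trace X = 0"
    unfolding X_def by (rule sl2_log_derivative[OF J t det(1) Dp])+
  have Y: "nderiv 1 Fm t = Fm t ** Y" "trace Y = 0"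
    unfolding Y_def by (rule sl2_log_derivative[OF J t det(2) Dm])+
  note sandwich_deriv = nderiv_Suc_sandwich_adj2[OF J t _ Dp[unfolded X(1)] Dm[unfolded Y(1)] Y(2)]
  have \<gamma>0: "\<forall>s\<in>J. nderiv 0 \<gamma> s = Fp s ** mat 1 ** adj2 (Fm s)"
    using \<gamma> det by (simp add: matrix_inv_eq_adj2)
  have \<gamma>1: "\<forall>s\<in>J. nderiv 1 \<gamma> s = Fp s ** mk2 0 2 0 0 ** adj2 (Fm s)"
  proof
    fix s assume "s \<in> J"
    have "nderiv 1 \<gamma> s = sqrt 2 *\<^sub>R Tfr \<gamma> s" by (simp add: Tfr_def)
    with \<open>s \<in> J\<close> T det show "nderiv 1 \<gamma> s = Fp s ** mk2 0 2 0 0 ** adj2 (Fm s)"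
      by (simp add: matrix_inv_eq_adj2 scaleR_sandwich scaleR_P2_P3)
  qed
  have \<gamma>2: "\<forall>s\<in>J. nderiv 2 \<gamma> s = Fp s ** mk2 (-2) 0 0 2 ** adj2 (Fm s)"
  proof
    fix s assume "s \<in> J"
    have "nderiv 2 \<gamma> s = 2 *\<^sub>R Nfr \<gamma> s" by (simp add: Nfr_def)
    with \<open>s \<in> J\<close> N det show "nderiv 2 \<gamma> s = Fp s ** mk2 (-2) 0 0 2 ** adj2 (Fm s)"
      by (simp add: matrix_inv_eq_adj2 scaleR_sandwich scaleR_P2_P3)
  qed
  have "X - Y = mk2 0 2 0 0"
    using sandwich_deriv[OF \<gamma>0, unfolded nderiv_Suc_numerals] \<gamma>1 t det by (simp add: sandwich_adj2_eq_iff)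
  moreover have "X ** mk2 0 2 0 0 - mk2 0 2 0 0 ** Y = mk2 (-2) 0 0 2"
    using sandwich_deriv[OF \<gamma>1, unfolded nderiv_Suc_numerals] \<gamma>2 t det by (simp add: sandwich_adj2_eq_iff)
  ultimately obtain k where XY: "X = ca_cartan k" "Y = ca_cartan (k - 2)"
    using sl2_frame_equations[OF X(2) Y(2)] by blast
  have "bending \<gamma> t = - (1/16) * ip (mk2 0 (2 * (k + (k - 2))) (-4) 0) (mk2 0 (2 * (k + (k - 2))) (-4) 0)"
    using sandwich_deriv[OF \<gamma>2, unfolded nderiv_Suc_numerals XY] t det
    by (simp add: bending_def ca_cartan_brackets ip_sandwich)
  then have "k = bending \<gamma> t + 1"
    by (simp add: ip_mk2 algebra_simps)
  with X(1) Y(1) XY show "nderiv 1 Fp t = Fp t ** ca_cartan (bending \<gamma> t + 1)"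
    and "nderiv 1 Fm t = Fm t ** ca_cartan (bending \<gamma> t - 1)"
    by simp_all
qed

lemma cousins_of_spinor_frame:
  assumes J: "open J" and frame: "spinor_frame J \<gamma> Fp Fm"
  defines "\<eta>p \<equiv> \<lambda>t. column 1 (Fp t)" and "\<eta>m \<equiv> \<lambda>t. column 1 (Fm t)"
  shows "star_shaped J \<eta>p \<and> star_shaped J \<eta>m \<and> ca_arclength J \<eta>p \<and> ca_arclength J \<eta>m
    \<and> (\<forall>t\<in>J. ca_frame \<eta>p t = Fp t \<and> ca_frame \<eta>m t = Fm t
          \<and> ca_curvature \<eta>p t = bending \<gamma> t + 1 \<and> ca_curvature \<eta>m t = bending \<gamma> t - 1)
    \<and> cousins J \<eta>p \<eta>m"
proof -
  from frame have smooth: "smooth_on J Fp" "smooth_on J Fm"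
    and det: "\<forall>s\<in>J. det (Fp s) = 1" "\<forall>s\<in>J. det (Fm s) = 1"
    unfolding spinor_frame_def by auto
  note p = ca_frame_of_cartan[OF J smooth(1) det(1), of "\<lambda>t. bending \<gamma> t + 1", folded \<eta>p_def]
  note m = ca_frame_of_cartan[OF J smooth(2) det(2), of "\<lambda>t. bending \<gamma> t - 1", folded \<eta>m_def]
  have "star_shaped J \<eta>p" "ca_arclength J \<eta>p" "star_shaped J \<eta>m" "ca_arclength J \<eta>m"
    and "\<forall>t\<in>J. ca_frame \<eta>p t = Fp t \<and> ca_curvature \<eta>p t = bending \<gamma> t + 1"
    and "\<forall>t\<in>J. ca_frame \<eta>m t = Fm t \<and> ca_curvature \<eta>m t = bending \<gamma> t - 1"
    using p m spinor_frame_nderiv_eq_cartan[OF J frame] by blast+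
  then show ?thesis by (simp add: cousins_def)
qed

lemma cousins_nderiv_sandwich:
  assumes J: "open J" and C: "cousins J \<eta>p \<eta>m"
  defines "\<gamma> \<equiv> \<lambda>t. ca_frame \<eta>p t ** matrix_inv (ca_frame \<eta>m t)"
  shows "\<forall>t\<in>J. nderiv 1 \<gamma> t = ca_frame \<eta>p t ** mk2 0 2 0 0 ** adj2 (ca_frame \<eta>m t)"
    and "\<forall>t\<in>J. nderiv 2 \<gamma> t = ca_frame \<eta>p t ** mk2 (-2) 0 0 2 ** adj2 (ca_frame \<eta>m t)"
    and "\<forall>t\<in>J. nderiv 3 \<gamma> t = ca_frame \<eta>p t
        ** mk2 0 (2 * (ca_curvature \<eta>p t + ca_curvature \<eta>m t)) (-4) 0 ** adj2 (ca_frame \<eta>m t)"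
proof -
  from C have smooth: "smooth_on J \<eta>p" "smooth_on J \<eta>m"
    and arc: "ca_arclength J \<eta>p" "ca_arclength J \<eta>m"
    and cousin: "\<forall>t\<in>J. ca_curvature \<eta>p t - ca_curvature \<eta>m t = 2"
    unfolding cousins_def star_shaped_def by auto
  have det: "\<forall>t\<in>J. det (ca_frame \<eta>m t) = 1"
    using arc(2) by (simp add: ca_arclength_def ca_frame_def)
  have sandwich_deriv: "nderiv (Suc n) \<gamma> t = ca_frame \<eta>p t
        ** (ca_cartan (ca_curvature \<eta>p t) ** M - M ** ca_cartan (ca_curvature \<eta>m t)) ** adj2 (ca_frame \<eta>m t)"
    if "t \<in> J" "\<forall>s\<in>J. nderiv n \<gamma> s = ca_frame \<eta>p s ** M ** adj2 (ca_frame \<eta>m s)" for t n M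
    by (rule nderiv_Suc_sandwich_adj2[OF J that ca_frame_has_vector_derivative[OF J smooth(1) arc(1) that(1)]
          ca_frame_has_vector_derivative[OF J smooth(2) arc(2) that(1)] trace_ca_cartan])
  have "\<forall>t\<in>J. nderiv 0 \<gamma> t = ca_frame \<eta>p t ** mat 1 ** adj2 (ca_frame \<eta>m t)"
    using det by (simp add: \<gamma>_def matrix_inv_eq_adj2)
  from sandwich_deriv[OF _ this, unfolded nderiv_Suc_numerals]
  show \<gamma>1: "\<forall>t\<in>J. nderiv 1 \<gamma> t = ca_frame \<eta>p t ** mk2 0 2 0 0 ** adj2 (ca_frame \<eta>m t)"
    using cousin by (simp add: ca_cartan_brackets)
  show \<gamma>2: "\<forall>t\<in>J. nderiv 2 \<gamma> t = ca_frame \<eta>p t ** mk2 (-2) 0 0 2 ** adj2 (ca_frame \<eta>m t)"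
    using sandwich_deriv[OF _ \<gamma>1, unfolded nderiv_Suc_numerals] by (simp add: ca_cartan_brackets)
  show "\<forall>t\<in>J. nderiv 3 \<gamma> t = ca_frame \<eta>p t
      ** mk2 0 (2 * (ca_curvature \<eta>p t + ca_curvature \<eta>m t)) (-4) 0 ** adj2 (ca_frame \<eta>m t)"
    using sandwich_deriv[OF _ \<gamma>2, unfolded nderiv_Suc_numerals] by (simp add: ca_cartan_brackets)
qed

lemma future_directed_sandwich:
  fixes A B :: mat2
  assumes "det A = 1" "det B = 1"
  shows "ip Umat (A ** adj2 B) * ip Vmat (A ** mk2 0 2 0 0 ** adj2 B)
      - ip Umat (A ** mk2 0 2 0 0 ** adj2 B) * ip Vmat (A ** adj2 B) > 0"
proof -
  have "ip Umat (A ** adj2 B) * ip Vmat (A ** mk2 0 2 0 0 ** adj2 B)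
      - ip Umat (A ** mk2 0 2 0 0 ** adj2 B) * ip Vmat (A ** adj2 B)
    = ((A$1$1)\<^sup>2 + (A$2$1)\<^sup>2 + (B$1$1)\<^sup>2 + (B$2$1)\<^sup>2) / 2"
    using assms by (simp add: Umat_def Vmat_def ip_def qf_def adj2_def mat2_entry_simps) algebra
  moreover have "(A$1$1)\<^sup>2 + (A$2$1)\<^sup>2 > 0"
    using assms(1) by (auto simp: det_2 sum_power2_gt_zero_iff)
  moreover have "(B$1$1)\<^sup>2 + (B$2$1)\<^sup>2 \<ge> 0"
    by simp
  ultimately show ?thesis by (simp only: add.assoc[symmetric]) (simp add: add_pos_nonneg)
qed

lemma scaleR_mk2_eq_P2_P3_P4:
  "(1 / sqrt 2) *\<^sub>R mk2 0 2 0 0 = P2" "(1 / 2) *\<^sub>R mk2 (-2) 0 0 2 = P3"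
  "(K / 2 / sqrt 2) *\<^sub>R mk2 0 2 0 0 - (1 / (2 * sqrt 2)) *\<^sub>R mk2 0 (2 * K) (-4) 0 = P4"
  by (simp_all add: P2_def P3_def P4_def mat2_eq_iff field_simps)

lemma null_curve_of_cousins:
  assumes J: "open J" and C: "cousins J \<eta>p \<eta>m"
  defines "\<gamma> \<equiv> \<lambda>t. ca_frame \<eta>p t ** matrix_inv (ca_frame \<eta>m t)"
  shows "null_curve J \<gamma> \<and> future_directed J \<gamma> \<and> proper_time J \<gamma> \<and> no_inflection J \<gamma>
    \<and> (\<forall>t\<in>J. bending \<gamma> t = (ca_curvature \<eta>p t + ca_curvature \<eta>m t) / 2)
    \<and> spinor_frame J \<gamma> (ca_frame \<eta>p) (ca_frame \<eta>m)"
proof -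
  let ?Fp = "ca_frame \<eta>p" and ?Fm = "ca_frame \<eta>m"
  from C have smooth: "smooth_on J ?Fp" "smooth_on J ?Fm"
    and det: "\<forall>t\<in>J. det (?Fp t) = 1" "\<forall>t\<in>J. det (?Fm t) = 1"
    by (auto simp: cousins_def star_shaped_def ca_arclength_def ca_frame_def intro: smooth_on_ca_frame[OF J])
  note \<gamma>' = cousins_nderiv_sandwich[OF J C, folded \<gamma>_def]
  have \<gamma>: "\<forall>t\<in>J. \<gamma> t = ?Fp t ** adj2 (?Fm t)"
    using det by (simp add: \<gamma>_def matrix_inv_eq_adj2)
  have bending: "\<forall>t\<in>J. bending \<gamma> t = (ca_curvature \<eta>p t + ca_curvature \<eta>m t) / 2"
    using \<gamma>'(3) det by (simp add: bending_def ip_sandwich ip_mk2 field_simps)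
  have "smooth_on J (\<lambda>t. adj2 (?Fm t))"
    by (rule smooth_on_linear(1)[OF J bounded_linear_adj2 smooth(2)])
  then have "smooth_on J (\<lambda>t. matrix_inv (?Fm t))"
    by (rule smooth_on_cong[OF J, rotated]) (use det in \<open>simp add: matrix_inv_eq_adj2\<close>)
  then have "smooth_on J \<gamma>"
    unfolding \<gamma>_def by (rule smooth_on_bilinear[OF J bounded_bilinear_matrix_mult smooth(1)])
  moreover have "\<gamma> t \<in> AdS" if "t \<in> J" for t
    using \<gamma> det that by (simp add: AdS_def det_mul)
  moreover have "ip (nderiv 1 \<gamma> t) (nderiv 1 \<gamma> t) = 0" "ip (nderiv 2 \<gamma> t) (nderiv 2 \<gamma> t) = 4"
    if "t \<in> J" for t
    using \<gamma>' det that by (simp_all add: ip_sandwich ip_mk2)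
  moreover have "ip Umat (\<gamma> t) * ip Vmat (nderiv 1 \<gamma> t) - ip Umat (nderiv 1 \<gamma> t) * ip Vmat (\<gamma> t) > 0"
    if "t \<in> J" for t
    using future_directed_sandwich[of "?Fp t" "?Fm t"] \<gamma> \<gamma>' det that by simp
  moreover have "a = 0 \<and> b = 0" if "t \<in> J" "a *\<^sub>R nderiv 1 \<gamma> t + b *\<^sub>R nderiv 2 \<gamma> t = 0" for t a b
  proof -
    have "?Fp t ** (a *\<^sub>R mk2 0 2 0 0 + b *\<^sub>R mk2 (-2) 0 0 2) ** adj2 (?Fm t) = ?Fp t ** 0 ** adj2 (?Fm t)"
      using \<gamma>' that by (simp add: scaleR_sandwich sandwich_add)
    then have "a *\<^sub>R mk2 0 2 0 0 + b *\<^sub>R mk2 (-2) 0 0 2 = 0"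
      using det that by (simp only: sandwich_adj2_eq_iff)
    then show ?thesis by (simp add: mat2_eq_iff)
  qed
  moreover have "Tfr \<gamma> t = ?Fp t ** P2 ** matrix_inv (?Fm t)" "Nfr \<gamma> t = ?Fp t ** P3 ** matrix_inv (?Fm t)"
    "Bfr \<gamma> t = ?Fp t ** P4 ** matrix_inv (?Fm t)" if "t \<in> J" for t
  proof -
    have "bending \<gamma> t = (ca_curvature \<eta>p t + ca_curvature \<eta>m t) / 2"
      using bending that by blast
    then show "Tfr \<gamma> t = ?Fp t ** P2 ** matrix_inv (?Fm t)" "Nfr \<gamma> t = ?Fp t ** P3 ** matrix_inv (?Fm t)"
      "Bfr \<gamma> t = ?Fp t ** P4 ** matrix_inv (?Fm t)"
      using \<gamma>' det that
      by (simp_all only: Tfr_def Nfr_def Bfr_def matrix_inv_eq_adj2 scaleR_sandwich sandwich_diff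
          scaleR_mk2_eq_P2_P3_P4)
  qed
  ultimately show ?thesis
    using bending smooth det
    by (simp add: null_curve_def future_directed_def proper_time_def no_inflection_def spinor_frame_def
        \<gamma>_def matrix_inv_eq_adj2)
qed

theorem mainTheorem1:
  fixes J :: "real set"
  assumes J: "open_interval J"
  shows
   "(\<forall>(\<gamma>::real \<Rightarrow> mat2) Fp Fm.
       null_curve J \<gamma> \<and> future_directed J \<gamma> \<and> no_inflection J \<gamma> \<and> proper_time J \<gamma>
       \<and> spinor_frame J \<gamma> Fp Fm \<longrightarrow>
       (let \<eta>p = (\<lambda>t. column 1 (Fp t)); \<eta>m = (\<lambda>t. column 1 (Fm t)) in
          star_shaped J \<eta>p \<and> star_shaped J \<eta>m \<and> ca_arclength J \<eta>p \<and> ca_arclength J \<eta>m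
          \<and> (\<forall>t\<in>J. ca_frame \<eta>p t = Fp t \<and> ca_frame \<eta>m t = Fm t
                 \<and> ca_curvature \<eta>p t = bending \<gamma> t + 1
                 \<and> ca_curvature \<eta>m t = bending \<gamma> t - 1)
          \<and> cousins J \<eta>p \<eta>m))
    \<and>
    (\<forall>(\<eta>p::real \<Rightarrow> vec2) \<eta>m.
       cousins J \<eta>p \<eta>m \<longrightarrow>
       (let \<gamma> = (\<lambda>t. ca_frame \<eta>p t ** matrix_inv (ca_frame \<eta>m t)) in
          null_curve J \<gamma> \<and> future_directed J \<gamma> \<and> proper_time J \<gamma> \<and> no_inflection J \<gamma>
          \<and> (\<forall>t\<in>J. bending \<gamma> t = (ca_curvature \<eta>p t + ca_curvature \<eta>m t) / 2)
          \<and> spinor_frame J \<gamma> (ca_frame \<eta>p) (ca_frame \<eta>m)))"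
proof -
  have "open J" using J by (simp add: open_interval_def)
  then show ?thesis
    unfolding Let_def using cousins_of_spinor_frame null_curve_of_cousins by blast
qed

end
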